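(* Let $G$ be a finite cyclic group whose order has at least two distinct prime divisors. Then the difference graph $\mathcal{D}(G)$ is disconnected if and only if $G\cong\mathbb{Z}_{pq}$ where $p$ and $q$ are two distinct primes. Moreover, the diameter of $\mathcal{D}(G)$ is at most $6$ whenever $G\not\cong\mathbb{Z}_{pq}$.
   Context: For a finite group $G$ with identity $e$: the intersection power graph $\mathcal{G}_I(G)$ has vertex set $G$, two distinct non-identity vertices $x,y$ being adjacent iff $\langle x\rangle\cap\langle y\rangle\neq\{e\}$, and $e$ being adjacent to every other vertex. The power graph $\mathcal{P}(G)$ has vertex set $G$, two distinct vertices being adjacent iff one is a power of the other. The difference graph $\mathcal{D}(G)$ is the graph on vertex set $G$ with edge set $E(\mathcal{G}_I(G))\setminus E(\mathcal{P}(G))$, with all isolated vertices removed. *)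

theory Defs
  imports "HOL-Algebra.Algebra" "HOL-Library.Extended_Nat"
begin

definition pow_adj :: "('a, 'b) monoid_scheme \<Rightarrow> 'a \<Rightarrow> 'a \<Rightarrow> bool" where
  "pow_adj G x y \<longleftrightarrow> x \<in> carrier G \<and> y \<in> carrier G \<and> x \<noteq> y \<and>
     ((\<exists>k::int. y = x [^]\<^bsub>G\<^esub> k) \<or> (\<exists>k::int. x = y [^]\<^bsub>G\<^esub> k))"

definition ipow_adj :: "('a, 'b) monoid_scheme \<Rightarrow> 'a \<Rightarrow> 'a \<Rightarrow> bool" where
  "ipow_adj G x y \<longleftrightarrow> x \<in> carrier G \<and> y \<in> carrier G \<and> x \<noteq> y \<and>
     (x = \<one>\<^bsub>G\<^esub> \<or> y = \<one>\<^bsub>G\<^esub> \<or>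
      generate G {x} \<inter> generate G {y} \<noteq> {\<one>\<^bsub>G\<^esub>})"

definition diff_adj :: "('a, 'b) monoid_scheme \<Rightarrow> 'a \<Rightarrow> 'a \<Rightarrow> bool" where
  "diff_adj G x y \<longleftrightarrow> ipow_adj G x y \<and> \<not> pow_adj G x y"

definition diff_verts :: "('a, 'b) monoid_scheme \<Rightarrow> 'a set" where
  "diff_verts G = {x \<in> carrier G. \<exists>y. diff_adj G x y}"

definition diff_connected :: "('a, 'b) monoid_scheme \<Rightarrow> bool" where
  "diff_connected G \<longleftrightarrow> diff_verts G \<noteq> {} \<and>
     (\<forall>u \<in> diff_verts G. \<forall>v \<in> diff_verts G. (diff_adj G)\<^sup>*\<^sup>* u v)"

definition diff_dist :: "('a, 'b) monoid_scheme \<Rightarrow> 'a \<Rightarrow> 'a \<Rightarrow> enat" where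
  "diff_dist G u v = (if \<exists>n. (diff_adj G ^^ n) u v
                      then enat (LEAST n. (diff_adj G ^^ n) u v) else \<infinity>)"

definition diff_diam :: "('a, 'b) monoid_scheme \<Rightarrow> enat" where
  "diff_diam G = (SUP u \<in> diff_verts G. SUP v \<in> diff_verts G. diff_dist G u v)"

end

theory Submission
  imports Defs
begin

text \<open>In a finite cyclic group of order n, two elements are adjacent in D(G) exactly when their
orders a and b are not coprime and neither divides the other (\<open>divisor_diff_adj n a b\<close>); as every
divisor of n is the order of some element, walks in D(G) correspond to walks in this graph on the
divisors of n. If n = pq, no two of the divisors 1, p, q, pq are related, so D(G) is the empty
graph, which \<open>diff_connected\<close> counts as disconnected. Otherwise the cofactors n/p, for the primes
p dividing n, are pairwise adjacent, and every vertex is within distance 2 of one of them: an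
order that contains the full p-part of n is equal or adjacent to n/p, and every other vertex has
a neighbour whose order contains a full prime part. Hence any two vertices are joined by a walk of
length at most 5.\<close>

lemma relpowp_sym:
  assumes "symp R" "(R ^^ n) x y"
  shows "(R ^^ n) y x"
  using assms(2)
proof (induction n arbitrary: y)
  case (Suc n)
  from Suc.prems obtain z where "(R ^^ n) x z" "R z y" by (rule relpowp_Suc_E)
  with Suc.IH show ?case by (metis assms(1) relpowp_Suc_I2 sympD)
qed simp

lemma relpowp_2I: "R x y \<Longrightarrow> R y z \<Longrightarrow> (R ^^ 2) x z"
  by (auto simp: numeral_2_eq_2 intro: relpowp_Suc_I2)

lemma card_ge_2_obtain_distinct:
  assumes "2 \<le> card A"
  obtains a b where "a \<in> A" "b \<in> A" "a \<noteq> b"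
proof -
  have "finite A" by (rule ccontr) (use assms in simp)
  moreover have "\<not> card A \<le> Suc 0" using assms by simp
  ultimately show ?thesis using that by (auto simp: card_le_Suc0_iff_eq)
qed

definition divisor_diff_adj :: "nat \<Rightarrow> nat \<Rightarrow> nat \<Rightarrow> bool" where
  "divisor_diff_adj n a b \<longleftrightarrow>
     a dvd n \<and> b dvd n \<and> \<not> coprime a b \<and> \<not> a dvd b \<and> \<not> b dvd a"

lemma symp_divisor_diff_adj: "symp (divisor_diff_adj n)"
  by (rule sympI) (auto simp: divisor_diff_adj_def coprime_commute)

lemma divisor_diff_adjD:
  assumes "divisor_diff_adj n a b"
  shows "a \<noteq> 1" "\<not> Factorial_Ring.prime a" "a \<noteq> n"
  using assms prime_imp_coprime unfolding divisor_diff_adj_def by auto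

lemma not_dvd_div_prime_multiplicity:
  fixes n p :: nat
  assumes "Factorial_Ring.prime p" "p dvd n" "n \<noteq> 0"
  shows "\<not> p ^ multiplicity p n dvd n div p"
proof
  assume "p ^ multiplicity p n dvd n div p"
  then have "p ^ multiplicity p n * p dvd n div p * p" by (rule mult_dvd_mono) simp
  then have "p ^ Suc (multiplicity p n) dvd n" using assms(2) by (simp add: power_Suc2 mult.commute)
  then show False
    using assms by (metis Suc_n_not_le_n multiplicity_geI not_prime_unit)
qed

lemma divisor_diff_adj_cofactor:
  fixes n a r :: nat
  assumes "a dvd n" "Factorial_Ring.prime r" "r dvd n" "\<not> a dvd n div r" "a \<noteq> r" "a \<noteq> n"
  shows "a = n div r \<or> divisor_diff_adj n a (n div r)"
proof -
  have n: "n = r * (n div r)" using assms(3) by simp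
  have "\<not> coprime a (n div r)"
  proof
    assume "coprime a (n div r)"
    then have "a dvd r" using assms(1) n by (metis coprime_dvd_mult_left_iff)
    then show False using assms(2,4,5) by (auto simp: prime_nat_iff)
  qed
  moreover have "a = n div r" if "n div r dvd a"
  proof -
    obtain t where t: "a = n div r * t" using \<open>n div r dvd a\<close> ..
    have "n div r \<noteq> 0" using assms(4) by (metis dvd_0_right)
    moreover have "n div r * t dvd n div r * r" using assms(1) n t by (simp add: mult.commute)
    ultimately have "t dvd r" by simp
    then show ?thesis using assms(2,6) n t by (auto simp: prime_nat_iff mult.commute)
  qed
  moreover have "n div r dvd n" using n by (metis dvd_triv_right)
  ultimately show ?thesis
    using assms(1,4) unfolding divisor_diff_adj_def by auto
qed

lemma divisor_diff_adj_prime_power: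
  fixes n p r i :: nat
  assumes "n \<noteq> 0" "Factorial_Ring.prime p" "Factorial_Ring.prime r" "p \<noteq> r"
    and "p ^ i dvd n" "2 \<le> i" "r dvd n"
  shows "divisor_diff_adj n (p ^ i) (p * r ^ multiplicity r n)"
proof -
  define c where "c = p * r ^ multiplicity r n"
  have "p dvd n" using assms(5,6) by (metis dvd_power dvd_trans not_numeral_le_zero not_gr0)
  moreover have "coprime p (r ^ multiplicity r n)" using assms(2-4) by (simp add: primes_coprime)
  ultimately have "c dvd n" unfolding c_def by (simp add: divides_mult multiplicity_dvd)
  have "multiplicity r n > 0" using assms(1,3,7) by (simp add: prime_multiplicity_gt_zero_iff)
  then have "r dvd c" by (simp add: c_def)
  have "\<not> c dvd p ^ i"
  proof
    assume "c dvd p ^ i"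
    then have "r dvd p" using \<open>r dvd c\<close> assms(3) by (metis dvd_trans prime_dvd_power)
    then show False using primes_dvd_imp_eq[OF assms(3,2)] assms(4) by simp
  qed
  moreover have "\<not> p ^ i dvd c"
  proof
    assume "p ^ i dvd c"
    moreover have "p * p dvd p ^ i" using assms(6) by (metis le_imp_power_dvd power2_eq_square)
    ultimately have "p * p dvd p * r ^ multiplicity r n" unfolding c_def by (metis dvd_trans)
    then have "p dvd r" using assms(2) by (simp add: prime_gt_0_nat prime_dvd_power)
    then show False using primes_dvd_imp_eq[OF assms(2,3)] assms(4) by simp
  qed
  moreover have "\<not> coprime (p ^ i) c"
    using assms(2,6) unfolding c_def by (metis dvd_power dvd_triv_left not_coprimeI not_prime_unit not_numeral_le_zero not_gr0)
  ultimately show ?thesis using \<open>c dvd n\<close> assms(5) unfolding c_def divisor_diff_adj_def by blast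
qed

text \<open>The condition \<open>\<not> c dvd n div r\<close> says that c contains the full r-part of n.\<close>
lemma exists_neighbour_with_full_prime_part:
  fixes n a b p1 p2 :: nat
  assumes "n \<noteq> 0" "divisor_diff_adj n a b"
    and "Factorial_Ring.prime p1" "Factorial_Ring.prime p2" "p1 \<noteq> p2" "p1 dvd n" "p2 dvd n"
  shows "\<exists>c r. (c = a \<or> divisor_diff_adj n a c) \<and>
           Factorial_Ring.prime r \<and> r dvd n \<and> \<not> c dvd n div r"
proof -
  have a: "a dvd n" "a \<noteq> 1" "\<not> Factorial_Ring.prime a"
    using assms(2) divisor_diff_adjD[OF assms(2)] unfolding divisor_diff_adj_def by auto
  then obtain p where p: "Factorial_Ring.prime p" "p dvd a"
    using assms(1) by (metis dvd_0_left prime_factor_nat)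
  have pn: "p dvd n" using p(2) a(1) by (rule dvd_trans)
  define P where "P = p ^ multiplicity p n"
  have "multiplicity p n > 0" using p(1) pn assms(1) by (simp add: prime_multiplicity_gt_zero_iff)
  then have P: "P dvd n" "p dvd P" "\<not> P dvd n div p"
    using not_dvd_div_prime_multiplicity[OF p(1) pn assms(1)]
    unfolding P_def by (auto simp: multiplicity_dvd dvd_power)
  consider "P dvd a" | "a dvd P" "\<not> P dvd a" | "\<not> a dvd P" "\<not> P dvd a" by blast
  then show ?thesis
  proof cases
    case 1
    then have "\<not> a dvd n div p" using P(3) by (metis dvd_trans)
    then show ?thesis using p(1) pn by blast
  next
    case 2
    then obtain i where i: "a = p ^ i" using p(1) unfolding P_def by (auto simp: divides_primepow_nat)
    with a p(1) have "i \<noteq> 0" "i \<noteq> 1" by auto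
    then have "2 \<le> i" by simp
    obtain r where r: "Factorial_Ring.prime r" "r dvd n" "r \<noteq> p" using assms(3-7) by metis
    have "divisor_diff_adj n a (p * r ^ multiplicity r n)"
      using divisor_diff_adj_prime_power[OF assms(1) p(1) r(1) r(3)[symmetric] _ \<open>2 \<le> i\<close> r(2)] i a(1)
      by simp
    moreover have "\<not> p * r ^ multiplicity r n dvd n div r"
      using not_dvd_div_prime_multiplicity[OF r(1,2) assms(1)] by (metis dvd_mult_right)
    ultimately show ?thesis using r(1,2) by blast
  next
    case 3
    have "\<not> coprime a P" using p P(2) by (metis not_coprimeI not_prime_unit)
    then have "divisor_diff_adj n a P" using 3 a(1) P(1) unfolding divisor_diff_adj_def by blast
    then show ?thesis using p(1) pn P(3) by blast
  qed
qed

lemma divisor_diff_adj_cofactors: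
  fixes n p r :: nat
  assumes "Factorial_Ring.prime p" "Factorial_Ring.prime r" "p \<noteq> r" "p dvd n" "r dvd n"
    and "n \<noteq> 0" "n \<noteq> p * r"
  shows "divisor_diff_adj n (n div p) (n div r)"
proof -
  have "p * r dvd n" using assms by (simp add: divides_mult primes_coprime)
  then obtain t where t: "n = p * r * t" ..
  have "t \<noteq> 0" "t \<noteq> 1" using t assms(6,7) by auto
  moreover have "\<not> r dvd p" "\<not> p dvd r" using assms(1-3) primes_dvd_imp_eq by metis+
  moreover have "n div p = r * t" "n div r = p * t" using t assms(1,2) by (simp_all add: prime_gt_0_nat)
  ultimately show ?thesis unfolding divisor_diff_adj_def by (auto simp: t)
qed

lemma divisor_diff_walk_to_cofactor:
  fixes n a b p1 p2 :: nat
  assumes "n \<noteq> 0" "divisor_diff_adj n a b"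
    and "Factorial_Ring.prime p1" "Factorial_Ring.prime p2" "p1 \<noteq> p2" "p1 dvd n" "p2 dvd n"
  shows "\<exists>r m. Factorial_Ring.prime r \<and> r dvd n \<and> 0 < m \<and> m \<le> 2 \<and>
           (divisor_diff_adj n ^^ m) a (n div r)"
proof -
  let ?D = "divisor_diff_adj n"
  obtain c r where c: "c = a \<or> ?D a c" and r: "Factorial_Ring.prime r" "r dvd n" "\<not> c dvd n div r"
    using exists_neighbour_with_full_prime_part[OF assms] by blast
  have "\<exists>d. ?D c d" using c assms(2) symp_divisor_diff_adj by (metis sympD)
  then have "c dvd n" "c \<noteq> r" "c \<noteq> n"
    using r(1) divisor_diff_adjD unfolding divisor_diff_adj_def by blast+
  then have c_hub: "c = n div r \<or> ?D c (n div r)"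
    using divisor_diff_adj_cofactor r by blast
  have "\<exists>m. 0 < m \<and> m \<le> 2 \<and> (?D ^^ m) a (n div r)"
  proof (cases "c = a")
    case True
    show ?thesis
    proof (cases "a = n div r")
      case True
      with assms(2) have "(?D ^^ 2) a (n div r)"
        using symp_divisor_diff_adj by (metis relpowp_2I sympD)
      then show ?thesis by (intro exI[of _ 2]) simp
    next
      case False
      with c_hub \<open>c = a\<close> have "(?D ^^ 1) a (n div r)" by (simp only: relpowp_1) simp
      then show ?thesis by (intro exI[of _ 1]) simp
    qed
  next
    case False
    with c have "?D a c" by simp
    from c_hub show ?thesis
    proof
      assume "c = n div r"
      with \<open>?D a c\<close> have "(?D ^^ 1) a (n div r)" by (simp only: relpowp_1)
      then show ?thesis by (intro exI[of _ 1]) simp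
    next
      assume "?D c (n div r)"
      with \<open>?D a c\<close> have "(?D ^^ 2) a (n div r)" by (rule relpowp_2I)
      then show ?thesis by (intro exI[of _ 2]) simp
    qed
  qed
  then show ?thesis using r(1,2) by blast
qed

lemma divisor_diff_walk:
  fixes n a b c d p1 p2 :: nat
  assumes "n \<noteq> 0" "\<nexists>p q. Factorial_Ring.prime p \<and> Factorial_Ring.prime q \<and> p \<noteq> q \<and> n = p * q"
    and "Factorial_Ring.prime p1" "Factorial_Ring.prime p2" "p1 \<noteq> p2" "p1 dvd n" "p2 dvd n"
    and "divisor_diff_adj n a b" "divisor_diff_adj n c d"
  shows "\<exists>m. 0 < m \<and> m \<le> 5 \<and> (divisor_diff_adj n ^^ m) a c"
proof -
  let ?D = "divisor_diff_adj n"
  obtain r k where r: "Factorial_Ring.prime r" "r dvd n" "0 < k" "k \<le> 2" "(?D ^^ k) a (n div r)"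
    using divisor_diff_walk_to_cofactor[OF assms(1,8,3-7)] by blast
  obtain s l where s: "Factorial_Ring.prime s" "s dvd n" "0 < l" "l \<le> 2" "(?D ^^ l) c (n div s)"
    using divisor_diff_walk_to_cofactor[OF assms(1,9,3-7)] by blast
  have to_c: "(?D ^^ l) (n div s) c" using s(5) symp_divisor_diff_adj by (rule relpowp_sym[rotated])
  show ?thesis
  proof (cases "r = s")
    case True
    then have "(?D ^^ (k + l)) a c" using r(5) to_c by (metis relpowp_trans)
    then show ?thesis using r(3,4) s(4) by (intro exI[of _ "k + l"]) simp
  next
    case False
    have "?D (n div r) (n div s)"
      using divisor_diff_adj_cofactors[OF r(1) s(1) False r(2) s(2) assms(1)] assms(2) r(1) s(1) False by blast
    then have "(?D ^^ (k + 1 + l)) a c" using r(5) to_c by (metis relpowp_1 relpowp_trans)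
    then show ?thesis using r(3,4) s(4) by (intro exI[of _ "k + 1 + l"]) simp
  qed
qed

lemma divisor_diff_adj_semiprime:
  fixes p q a b :: nat
  assumes "Factorial_Ring.prime p" "Factorial_Ring.prime q"
  shows "\<not> divisor_diff_adj (p * q) a b"
proof
  assume adj: "divisor_diff_adj (p * q) a b"
  then obtain u v where "a = u * v" "u dvd p" "v dvd q"
    unfolding divisor_diff_adj_def by (metis division_decomp)
  moreover have "u = 1 \<or> u = p" "v = 1 \<or> v = q"
    using \<open>u dvd p\<close> \<open>v dvd q\<close> assms by (auto simp: prime_nat_iff)
  ultimately have "a = 1 \<or> a = p \<or> a = q \<or> a = p * q" by auto
  then show False using divisor_diff_adjD[OF adj] assms by auto
qed

lemma diff_diam_le:
  assumes "\<And>u v. u \<in> diff_verts G \<Longrightarrow> v \<in> diff_verts G \<Longrightarrow> \<exists>m\<le>k. (diff_adj G ^^ m) u v"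
  shows "diff_diam G \<le> enat k"
  unfolding diff_diam_def
proof (intro SUP_least)
  fix u v assume "u \<in> diff_verts G" "v \<in> diff_verts G"
  then obtain m where m: "m \<le> k" "(diff_adj G ^^ m) u v" using assms by blast
  then have "diff_dist G u v \<le> enat m" unfolding diff_dist_def by (auto intro: Least_le)
  also have "\<dots> \<le> enat k" using m(1) by simp
  finally show "diff_dist G u v \<le> enat k" .
qed

lemma card_integer_mod_group: "card (carrier (integer_mod_group n)) = n"
  by (simp add: carrier_integer_mod_group)

context group
begin

lemma finite_cyclic_generator:
  assumes "finite (carrier G)" "cyclic_group G"
  obtains g where "g \<in> carrier G" "ord g = order G" "\<And>x. x \<in> carrier G \<Longrightarrow> \<exists>i::nat. x = g [^] i"
proof -
  obtain g where g: "g \<in> carrier G" "carrier G = range (\<lambda>n::int. g [^] n)"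
    using assms(2) cyclic_group by blast
  then have gen: "generate G {g} = carrier G" using generate_pow by auto
  then have "ord g = order G" using generate_pow_card[OF g(1)] unfolding order_def by simp
  moreover have "\<exists>i::nat. x = g [^] i" if "x \<in> carrier G" for x
    using that generate_pow_on_finite_carrier[OF assms(1) g(1)] gen by auto
  ultimately show ?thesis using that g(1) by blast
qed

lemma iso_integer_mod_group_order:
  assumes "finite (carrier G)" "cyclic_group G"
  shows "G \<cong> integer_mod_group (order G)"
proof -
  obtain g where g: "g \<in> carrier G" "ord g = order G" "\<And>x. x \<in> carrier G \<Longrightarrow> \<exists>i::nat. x = g [^] i"
    using finite_cyclic_generator[OF assms] by metis
  define n where "n = order G"
  have "n > 0" using assms(1) order_gt_0_iff_finite n_def by simp
  then have car: "carrier (integer_mod_group n) = {0..<int n}" by (simp add: carrier_integer_mod_group)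
  define f where "f = (\<lambda>k::int. g [^] k)"
  have f_eq_iff: "f k = f l \<longleftrightarrow> int n dvd l - k" for k l
    unfolding f_def n_def using int_pow_eq[OF g(1)] g(2) by simp
  have "f \<in> hom (integer_mod_group n) G"
  proof (rule homI)
    fix k l
    have "f ((k + l) mod int n) = f (k + l)" using f_eq_iff by (simp add: mod_eq_dvd_iff)
    then show "f (k \<otimes>\<^bsub>integer_mod_group n\<^esub> l) = f k \<otimes> f l"
      unfolding f_def by (simp add: int_pow_mult[OF g(1)])
  qed (simp add: f_def g(1))
  moreover have "inj_on f {0..<int n}"
    by (rule inj_onI) (auto simp: f_eq_iff mod_eq_dvd_iff[symmetric])
  moreover have "f ` {0..<int n} = carrier G"
  proof
    show "carrier G \<subseteq> f ` {0..<int n}"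
    proof
      fix x assume "x \<in> carrier G"
      then obtain i :: nat where "x = g [^] i" using g(3) by blast
      moreover have "f (int i mod int n) = f (int i)" using f_eq_iff by (simp add: mod_eq_dvd_iff)
      ultimately have "x = f (int i mod int n)" by (simp add: f_def int_pow_int)
      then show "x \<in> f ` {0..<int n}" using \<open>n > 0\<close> by auto
    qed
  qed (auto simp: f_def g(1))
  ultimately have "f \<in> iso (integer_mod_group n) G"
    by (intro isoI) (simp_all add: car bij_betw_def)
  then have "integer_mod_group n \<cong> G" by (rule is_isoI)
  then show ?thesis unfolding n_def by (rule group.iso_sym[OF group_integer_mod_group])
qed

lemma iso_integer_mod_group_iff:
  assumes "finite (carrier G)" "cyclic_group G"
  shows "G \<cong> integer_mod_group n \<longleftrightarrow> order G = n"
  using iso_integer_mod_group_order[OF assms] iso_same_card card_integer_mod_group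
  unfolding order_def by metis

lemma ord_dvd_if_mem_generate:
  assumes "x \<in> carrier G" "y \<in> generate G {x}"
  shows "ord y dvd ord x"
proof -
  obtain k :: int where k: "y = x [^] k" using assms generate_pow by auto
  have "y [^] ord x = x [^] (k * int (ord x))" using k assms(1) by (simp add: int_pow_pow flip: int_pow_int)
  also have "\<dots> = \<one>" using assms(1) int_pow_eq_id by simp
  finally show ?thesis using pow_eq_id k assms(1) by simp
qed

lemma pow_gcd_ord_mem_generate:
  assumes "g \<in> carrier G"
  shows "g [^] gcd (ord g) i \<in> generate G {g [^] i}"
proof -
  obtain u v :: int where uv: "u * int i + v * int (ord g) = int (gcd (ord g) i)"
    by (metis bezout_int gcd.commute gcd_int_int_eq)
  then have "int i * u - int (gcd (ord g) i) = int (ord g) * (- v)" by (simp add: algebra_simps)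
  then have "int (ord g) dvd int i * u - int (gcd (ord g) i)" by simp
  then have "g [^] gcd (ord g) i = (g [^] i) [^] u"
    using int_pow_eq[OF assms] by (simp add: int_pow_pow assms flip: int_pow_int)
  then show ?thesis using generate_pow assms by auto
qed

lemma mem_generate_iff_ord_dvd:
  assumes "finite (carrier G)" "cyclic_group G" "x \<in> carrier G" "y \<in> carrier G"
  shows "y \<in> generate G {x} \<longleftrightarrow> ord y dvd ord x"
proof
  assume "ord y dvd ord x"
  obtain g where g: "g \<in> carrier G" "ord g = order G" "\<And>x. x \<in> carrier G \<Longrightarrow> \<exists>i::nat. x = g [^] i"
    using finite_cyclic_generator[OF assms(1,2)] by metis
  obtain i j :: nat where ij: "x = g [^] i" "y = g [^] j" using g(3) assms(3,4) by metis
  define n h where "n = order G" and "h = gcd n i"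
  have "n > 0" using assms(1) order_gt_0_iff_finite n_def by simp
  then obtain k where k: "n = h * k" "k \<noteq> 0" unfolding h_def by (metis dvdE gcd_dvd1 mult_0_right not_gr0)
  have "n div h = k" using k \<open>n > 0\<close> by simp
  then have "ord x = k" using ord_pow_gen[OF g(1), of i] g(2) ij(1) k(1) \<open>n > 0\<close>
    unfolding n_def h_def by auto
  then have "y [^] k = \<one>" using \<open>ord y dvd ord x\<close> assms(4) by (simp add: pow_eq_id)
  then have "g [^] (j * k) = \<one>" using ij(2) g(1) by (simp add: nat_pow_pow)
  then have "h * k dvd j * k" using pow_eq_id[OF g(1)] g(2) k(1) n_def by simp
  then obtain m where "j = h * m" using k(2) by (auto elim: dvdE)
  then have "y = (g [^] h) [^] m" using ij(2) g(1) by (simp add: nat_pow_pow)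
  moreover have "g [^] h \<in> generate G {x}"
    using pow_gcd_ord_mem_generate[OF g(1)] g(2) ij(1) unfolding h_def n_def by simp
  then obtain l :: int where "g [^] h = x [^] l" using generate_pow[OF assms(3)] by auto
  ultimately have "y = x [^] (l * int m)" using assms(3) by (simp add: int_pow_pow flip: int_pow_int)
  then show "y \<in> generate G {x}" using generate_pow[OF assms(3)] by auto
qed (use ord_dvd_if_mem_generate assms in blast)

lemma exists_element_of_ord:
  assumes "finite (carrier G)" "cyclic_group G" "d dvd order G"
  obtains x where "x \<in> carrier G" "ord x = d"
proof -
  obtain g where g: "g \<in> carrier G" "ord g = order G"
    using finite_cyclic_generator[OF assms(1,2)] by metis
  obtain k where k: "order G = d * k" using assms(3) ..
  then have "k dvd ord g" "k \<noteq> 0" using g(2) assms(1) order_gt_0_iff_finite by auto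
  then have "ord (g [^] k) = d" using ord_pow[OF g(1)] g(2) k by simp
  then show ?thesis using that g(1) by blast
qed

lemma generate_inter_nontrivial_iff:
  assumes "finite (carrier G)" "cyclic_group G" "x \<in> carrier G" "y \<in> carrier G"
  shows "generate G {x} \<inter> generate G {y} \<noteq> {\<one>} \<longleftrightarrow> \<not> coprime (ord x) (ord y)"
proof
  assume "generate G {x} \<inter> generate G {y} \<noteq> {\<one>}"
  moreover have "\<one> \<in> generate G {x} \<inter> generate G {y}" by (simp add: generate.one)
  ultimately obtain z where z: "z \<in> generate G {x}" "z \<in> generate G {y}" "z \<noteq> \<one>" by blast
  then have "z \<in> carrier G" using generate_in_carrier assms(3) by blast
  with z have "ord z \<noteq> 1" "ord z dvd ord x" "ord z dvd ord y"
    using ord_eq_1 ord_dvd_if_mem_generate assms(3,4) by auto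
  then show "\<not> coprime (ord x) (ord y)" using coprime_common_divisor_nat by blast
next
  assume "\<not> coprime (ord x) (ord y)"
  then have "gcd (ord x) (ord y) \<noteq> 1" by (simp add: coprime_iff_gcd_eq_1)
  then obtain p :: nat where p: "Factorial_Ring.prime p" "p dvd gcd (ord x) (ord y)"
    using prime_factor_nat by blast
  then have p: "Factorial_Ring.prime p" "p dvd ord x" "p dvd ord y" by auto
  have "p dvd order G" using p(2) ord_dvd_group_order[OF assms(3)] by (rule dvd_trans)
  then obtain z where "z \<in> carrier G" "ord z = p" using exists_element_of_ord[OF assms(1,2)] by blast
  then have "z \<in> generate G {x} \<inter> generate G {y}" "z \<noteq> \<one>"
    using mem_generate_iff_ord_dvd assms p by auto
  then show "generate G {x} \<inter> generate G {y} \<noteq> {\<one>}" by blast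
qed

lemma pow_adj_iff_mem_generate:
  "pow_adj G x y \<longleftrightarrow>
     x \<in> carrier G \<and> y \<in> carrier G \<and> x \<noteq> y \<and> (y \<in> generate G {x} \<or> x \<in> generate G {y})"
proof (cases "x \<in> carrier G \<and> y \<in> carrier G")
  case True
  then show ?thesis unfolding pow_adj_def by (simp add: generate_pow image_iff eq_commute)
qed (auto simp: pow_adj_def)

lemma diff_adj_iff_divisor_diff_adj:
  assumes "finite (carrier G)" "cyclic_group G"
  shows "diff_adj G x y \<longleftrightarrow>
           x \<in> carrier G \<and> y \<in> carrier G \<and> divisor_diff_adj (order G) (ord x) (ord y)"
proof (cases "x \<in> carrier G \<and> y \<in> carrier G")
  case True
  then have ord_dvd: "ord x dvd order G" "ord y dvd order G" using ord_dvd_group_order by auto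
  show ?thesis
  proof (cases "x = \<one> \<or> y = \<one>")
    case True
    then have "x \<in> generate G {y} \<or> y \<in> generate G {x}" using generate.one by auto
    then have "\<not> diff_adj G x y"
      unfolding diff_adj_def ipow_adj_def pow_adj_iff_mem_generate by blast
    moreover have "ord x = 1 \<or> ord y = 1" using True by auto
    ultimately show ?thesis unfolding divisor_diff_adj_def by auto
  next
    case False
    then show ?thesis
      using True ord_dvd generate_inter_nontrivial_iff[OF assms] mem_generate_iff_ord_dvd[OF assms]
      unfolding diff_adj_def ipow_adj_def pow_adj_iff_mem_generate divisor_diff_adj_def
      by auto
  qed
qed (auto simp: diff_adj_def ipow_adj_def)

lemma diff_verts_iff_divisor_diff_adj:
  assumes "finite (carrier G)" "cyclic_group G"
  shows "x \<in> diff_verts G \<longleftrightarrow> x \<in> carrier G \<and> (\<exists>b. divisor_diff_adj (order G) (ord x) b)"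
proof -
  have "\<exists>y. diff_adj G x y" if x: "x \<in> carrier G" and b: "divisor_diff_adj (order G) (ord x) b" for b
  proof -
    obtain y where "y \<in> carrier G" "ord y = b"
      using exists_element_of_ord[OF assms] b unfolding divisor_diff_adj_def by blast
    then show ?thesis using x b diff_adj_iff_divisor_diff_adj[OF assms] by auto
  qed
  then show ?thesis
    unfolding diff_verts_def using diff_adj_iff_divisor_diff_adj[OF assms] by blast
qed

lemma diff_adj_walk_if_divisor_diff_walk:
  assumes "finite (carrier G)" "cyclic_group G" "x \<in> carrier G" "y \<in> carrier G"
    and "(divisor_diff_adj (order G) ^^ Suc m) (ord x) (ord y)"
  shows "(diff_adj G ^^ Suc m) x y"
  using assms(3,5)
proof (induction m arbitrary: x)
  case 0
  then show ?case using diff_adj_iff_divisor_diff_adj[OF assms(1,2)] assms(4) by (simp add: eq_OO)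
next
  case (Suc m)
  then obtain b where b: "divisor_diff_adj (order G) (ord x) b" "(divisor_diff_adj (order G) ^^ Suc m) b (ord y)"
    by (metis relpowp_Suc_E2)
  obtain z where z: "z \<in> carrier G" "ord z = b"
    using exists_element_of_ord[OF assms(1,2)] b(1) unfolding divisor_diff_adj_def by blast
  then have "diff_adj G x z" using b(1) Suc.prems(1) diff_adj_iff_divisor_diff_adj[OF assms(1,2)] by simp
  moreover have "(diff_adj G ^^ Suc m) z y" using Suc.IH z b(2) by simp
  ultimately show ?case by (rule relpowp_Suc_I2)
qed

lemma diff_verts_walk_le_5:
  assumes "finite (carrier G)" "cyclic_group G"
    and "\<nexists>p q. Factorial_Ring.prime p \<and> Factorial_Ring.prime q \<and> p \<noteq> q \<and> order G = p * q"
    and "Factorial_Ring.prime p1" "Factorial_Ring.prime p2" "p1 \<noteq> p2" "p1 dvd order G" "p2 dvd order G"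
    and "u \<in> diff_verts G" "v \<in> diff_verts G"
  shows "\<exists>m\<le>5. (diff_adj G ^^ m) u v"
proof -
  obtain a c where "u \<in> carrier G" "v \<in> carrier G"
    "divisor_diff_adj (order G) (ord u) a" "divisor_diff_adj (order G) (ord v) c"
    using assms(9,10) diff_verts_iff_divisor_diff_adj[OF assms(1,2), of u]
      diff_verts_iff_divisor_diff_adj[OF assms(1,2), of v] by blast
  moreover have "order G \<noteq> 0" using assms(1) order_gt_0_iff_finite by simp
  ultimately obtain m where m: "0 < m" "m \<le> 5" "(divisor_diff_adj (order G) ^^ m) (ord u) (ord v)"
    using divisor_diff_walk[OF _ assms(3-8)] by blast
  then obtain k where "m = Suc k" using gr0_implies_Suc by blast
  with m have "(diff_adj G ^^ m) u v"
    using diff_adj_walk_if_divisor_diff_walk[OF assms(1,2) \<open>u \<in> carrier G\<close> \<open>v \<in> carrier G\<close>] by simp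
  then show ?thesis using \<open>m \<le> 5\<close> by blast
qed

lemma diff_verts_nonempty:
  assumes "finite (carrier G)" "cyclic_group G"
    and "\<nexists>p q. Factorial_Ring.prime p \<and> Factorial_Ring.prime q \<and> p \<noteq> q \<and> order G = p * q"
    and "Factorial_Ring.prime p1" "Factorial_Ring.prime p2" "p1 \<noteq> p2" "p1 dvd order G" "p2 dvd order G"
  shows "diff_verts G \<noteq> {}"
proof -
  have "order G \<noteq> 0" using assms(1) order_gt_0_iff_finite by simp
  then have adj: "divisor_diff_adj (order G) (order G div p1) (order G div p2)"
    using divisor_diff_adj_cofactors[OF assms(4-8)] assms(3-6) by blast
  then obtain x where "x \<in> carrier G" "ord x = order G div p1"
    using exists_element_of_ord[OF assms(1,2)] unfolding divisor_diff_adj_def by blast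
  then have "x \<in> diff_verts G" using adj diff_verts_iff_divisor_diff_adj[OF assms(1,2), of x] by auto
  then show ?thesis by blast
qed

lemma diff_verts_empty_semiprime:
  assumes "finite (carrier G)" "cyclic_group G"
    and "Factorial_Ring.prime p" "Factorial_Ring.prime q" "order G = p * q"
  shows "diff_verts G = {}"
proof -
  have "\<not> divisor_diff_adj (order G) a b" for a b
    using divisor_diff_adj_semiprime[OF assms(3,4)] assms(5) by simp
  then show ?thesis using diff_verts_iff_divisor_diff_adj[OF assms(1,2)] by blast
qed

end

theorem theorem4p4:
  fixes G :: "('a, 'b) monoid_scheme"
  assumes "group G" and "finite (carrier G)" and "cyclic_group G"
    and "card {p. Factorial_Ring.prime (p::nat) \<and> p dvd order G} \<ge> 2"
  shows "(\<not> diff_connected G \<longleftrightarrow>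
           (\<exists>p q. Factorial_Ring.prime (p::nat) \<and> Factorial_Ring.prime q \<and> p \<noteq> q \<and> G \<cong> integer_mod_group (p * q)))
       \<and> ((\<not> (\<exists>p q. Factorial_Ring.prime (p::nat) \<and> Factorial_Ring.prime q \<and> p \<noteq> q \<and> G \<cong> integer_mod_group (p * q)))
            \<longrightarrow> diff_diam G \<le> 6)"
proof -
  interpret group G by fact
  note fin_cyc = assms(2,3)
  obtain p1 p2 where p12: "Factorial_Ring.prime p1" "Factorial_Ring.prime p2" "p1 \<noteq> p2"
    "p1 dvd order G" "p2 dvd order G"
    using card_ge_2_obtain_distinct[OF assms(4)] by blast
  have iso_iff: "(\<exists>p q. Factorial_Ring.prime (p::nat) \<and> Factorial_Ring.prime q \<and> p \<noteq> q \<and> G \<cong> integer_mod_group (p * q))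
      \<longleftrightarrow> (\<exists>p q. Factorial_Ring.prime (p::nat) \<and> Factorial_Ring.prime q \<and> p \<noteq> q \<and> order G = p * q)"
    using iso_integer_mod_group_iff[OF fin_cyc] by simp
  show ?thesis
  proof (cases "\<exists>p q. Factorial_Ring.prime (p::nat) \<and> Factorial_Ring.prime q \<and> p \<noteq> q \<and> order G = p * q")
    case True
    then obtain p q where "Factorial_Ring.prime p" "Factorial_Ring.prime q" "order G = p * q" by blast
    then have "diff_verts G = {}" by (rule diff_verts_empty_semiprime[OF fin_cyc])
    then have "\<not> diff_connected G" by (simp add: diff_connected_def)
    then show ?thesis using True iso_iff by simp
  next
    case False
    note walk = diff_verts_walk_le_5[OF fin_cyc False p12]
    have "diff_connected G"
      unfolding diff_connected_def using diff_verts_nonempty[OF fin_cyc False p12] walk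
      by (blast intro: relpowp_imp_rtranclp)
    moreover have "diff_diam G \<le> enat 5" using walk by (rule diff_diam_le)
    then have "diff_diam G \<le> 6" by (rule order_trans) (simp add: numeral_eq_enat)
    ultimately show ?thesis using False iso_iff by simp
  qed
qed

end
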